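(* Let $S=\{v_1,\ldots,v_n\}\subset\mathbb Z^n$, $n\ge3$, be non-acute, and suppose there are indices $i,s,t,u$ with $E_i=\{s,t,u\}$, $\langle v_s,v_t\rangle=-1$, $\langle v_s,e_i\rangle=-\langle v_t,e_i\rangle=\pm1$, $|\langle v_u,e_i\rangle|=1$ and $\langle v_u,v_u\rangle\ge3$. Let $$S'=(S\setminus\{v_s,v_t,v_u\})\cup\{v_s+v_t,\ v_u-\langle v_u,e_i\rangle e_i\}\subset\mathbb Z^{n-1}=\langle e_1,\ldots,e_{i-1},e_{i+1},\ldots,e_n\rangle$$ be the corresponding contraction. Write $\sum_{v\in S}v=\sum_{\alpha=1}^n k_\alpha e_\alpha$ and $\sum_{v\in S'}v=\sum_{\alpha\ne i}k'_\alpha e_\alpha$, and let $R_o^S=\{\alpha: k_\alpha \text{ odd}\}$, $R_o^{S'}=\{\alpha\ne i: k'_\alpha\text{ odd}\}$. Then $$\sum_{\alpha=1}^n k_\alpha^2>4n-3|R_o^S|\quad\Longleftrightarrow\quad \sum_{\alpha\ne i}k_\alpha'^2>4(n-1)-3|R_o^{S'}|.$$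
   Context: $\mathbb Z^n$ carries the standard dot product with standard basis $e_1,\ldots,e_n$. For $S=\{v_1,\ldots,v_n\}$, $E_j=\{\alpha:\langle v_\alpha,e_j\rangle\ne0\}$. $S$ is non-acute if $a_\alpha:=\langle v_\alpha,v_\alpha\rangle\ge1$ for all $\alpha$, $\langle v_\alpha,v_\beta\rangle\le0$ for $\alpha\ne\beta$, and $a_\alpha\ge-\sum_{\beta\ne\alpha}\langle v_\beta,v_\alpha\rangle$ for all $\alpha$. The inequality $\sum k_\alpha^2>4n-3|R_o|$ for a subset of $n$ vectors in $\mathbb Z^n$ with Wu element $\sum k_\alpha e_\alpha$ is the "Wu obstruction". *)

theory Defs
  imports Main
begin

text \<open>A family of vectors in Z^n is a function v :: nat => nat => int, where v a j is
  the j-th coordinate (pairing with e_j) of the a-th vector. Vectors are indexed by a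
  finite index set I, coordinates by a finite coordinate set J.\<close>

definition ip :: "nat set \<Rightarrow> (nat \<Rightarrow> int) \<Rightarrow> (nat \<Rightarrow> int) \<Rightarrow> int" where
  "ip J x y = (\<Sum>j\<in>J. x j * y j)"

definition Eset :: "nat set \<Rightarrow> (nat \<Rightarrow> nat \<Rightarrow> int) \<Rightarrow> nat \<Rightarrow> nat set" where
  "Eset I v j = {a \<in> I. v a j \<noteq> 0}"

definition non_acute :: "nat set \<Rightarrow> nat set \<Rightarrow> (nat \<Rightarrow> nat \<Rightarrow> int) \<Rightarrow> bool" where
  "non_acute I J v \<longleftrightarrow>
     (\<forall>a\<in>I. ip J (v a) (v a) \<ge> 1) \<and>
     (\<forall>a\<in>I. \<forall>b\<in>I. a \<noteq> b \<longrightarrow> ip J (v a) (v b) \<le> 0) \<and>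
     (\<forall>a\<in>I. ip J (v a) (v a) \<ge> - (\<Sum>b\<in>I - {a}. ip J (v b) (v a)))"

definition wu :: "nat set \<Rightarrow> (nat \<Rightarrow> nat \<Rightarrow> int) \<Rightarrow> nat \<Rightarrow> int" where
  "wu I v j = (\<Sum>a\<in>I. v a j)"

text \<open>Wu obstruction for n vectors in Z^n (index set I, coordinate set J, card J = card I = n).\<close>
definition wu_obstruction :: "nat set \<Rightarrow> nat set \<Rightarrow> (nat \<Rightarrow> nat \<Rightarrow> int) \<Rightarrow> bool" where
  "wu_obstruction I J v \<longleftrightarrow>
     (\<Sum>j\<in>J. (wu I v j)^2) > 4 * int (card I) - 3 * int (card {j\<in>J. odd (wu I v j)})"

text \<open>The contraction: index t is removed, v_s is replaced by v_s + v_t, v_u by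
  v_u - <v_u,e_i> e_i, the other vectors are kept; coordinate i is dropped
  (the new coordinate set is {1..n} - {i}, the new index set {1..n} - {t}).\<close>
definition contraction :: "(nat \<Rightarrow> nat \<Rightarrow> int) \<Rightarrow> nat \<Rightarrow> nat \<Rightarrow> nat \<Rightarrow> nat \<Rightarrow> nat \<Rightarrow> nat \<Rightarrow> int" where
  "contraction v i s t u a j =
     (if a = s then v s j + v t j
      else if a = u then v u j - (if j = i then v u i else 0)
      else v a j)"

end

theory Submission
  imports Defs
begin

text \<open>Every coordinate of the Wu element except the i-th is unchanged by the contraction,
  because v_s + v_t replaces v_s and v_t, and v_u changes only in coordinate i. The i-th
  coordinate is v_s i + v_t i + v_u i = v_u i = +-1, so removing one vector and this
  coordinate lowers both sides of the Wu inequality by exactly one.\<close>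

lemma wu_eq_sum_Eset:
  assumes "finite I"
  shows "wu I v j = (\<Sum>a\<in>Eset I v j. v a j)"
  unfolding wu_def Eset_def by (rule sum.mono_neutral_right) (use assms in auto)

lemma wu_contraction:
  assumes "finite I" "s \<in> I" "t \<in> I" "s \<noteq> t" "j \<noteq> i"
  shows "wu (I - {t}) (contraction v i s t u) j = wu I v j"
proof -
  have "wu (I - {t}) (contraction v i s t u) j = (\<Sum>a\<in>I - {t}. v a j + (if a = s then v t j else 0))"
    unfolding wu_def contraction_def using assms(5) by (intro sum.cong) auto
  also have "\<dots> = (\<Sum>a\<in>I - {t}. v a j) + v t j"
    using assms by (simp add: sum.distrib)
  also have "\<dots> = wu I v j"
    unfolding wu_def using sum.remove[OF assms(1,3), of "\<lambda>a. v a j"] by simp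
  finally show ?thesis .
qed

lemma wu_obstruction_drop_unit_coordinate:
  assumes "finite I" "t \<in> I" "finite J" "i \<in> J" "\<bar>wu I v i\<bar> = 1"
    and same: "\<And>j. j \<in> J - {i} \<Longrightarrow> wu (I - {t}) w j = wu I v j"
  shows "wu_obstruction I J v \<longleftrightarrow> wu_obstruction (I - {t}) (J - {i}) w"
proof -
  have unit: "wu I v i = 1 \<or> wu I v i = -1"
    using assms(5) by linarith
  have squares: "(\<Sum>j\<in>J. (wu I v j)^2) = (\<Sum>j\<in>J - {i}. (wu (I - {t}) w j)^2) + 1"
    using sum.remove[OF assms(3,4), of "\<lambda>j. (wu I v j)^2"] unit same by auto
  have "{j\<in>J. odd (wu I v j)} = insert i {j\<in>J - {i}. odd (wu (I - {t}) w j)}"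
    using assms(4) unit same by auto
  then have odds: "card {j\<in>J. odd (wu I v j)} = card {j\<in>J - {i}. odd (wu (I - {t}) w j)} + 1"
    using assms(3) by simp
  have "card I = card (I - {t}) + 1"
    using assms(1,2) card_Suc_Diff1 by fastforce
  then show ?thesis
    unfolding wu_obstruction_def squares odds by auto
qed

theorem lemma1p9:
  fixes n :: nat and v :: "nat \<Rightarrow> nat \<Rightarrow> int" and i s t u :: nat
  assumes "n \<ge> 3"
    and "non_acute {1..n} {1..n} v"
    and "i \<in> {1..n}"
    and "s \<noteq> t" and "s \<noteq> u" and "t \<noteq> u"
    and "Eset {1..n} v i = {s, t, u}"
    and "ip {1..n} (v s) (v t) = -1"
    and "v s i = - v t i" and "\<bar>v s i\<bar> = 1"
    and "\<bar>v u i\<bar> = 1"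
    and "ip {1..n} (v u) (v u) \<ge> 3"
  shows "wu_obstruction {1..n} {1..n} v \<longleftrightarrow>
         wu_obstruction ({1..n} - {t}) ({1..n} - {i}) (contraction v i s t u)"
proof -
  have stu: "s \<in> {1..n}" "t \<in> {1..n}" "u \<in> {1..n}"
    using assms(7) unfolding Eset_def by auto
  have "wu {1..n} v i = v s i + v t i + v u i"
    using wu_eq_sum_Eset[of "{1..n}" v i] assms(4-7) by simp
  then have "\<bar>wu {1..n} v i\<bar> = 1"
    using assms(9,11) by simp
  then show ?thesis
    using wu_obstruction_drop_unit_coordinate[of "{1..n}" t "{1..n}" i v] wu_contraction stu assms(3,4)
    by simp
qed

end
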